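(* Let $d>0$, let $\ell$ be a certified lower bound with certificate matrix $\Lambda$, and suppose $f(d,\ell)=1$. Let $j\in\{1,\dots,m\}$ satisfy $0<a_j^\top y(d,\ell)-u_j\le\gamma_j(d,\ell)$. Define $\ell^{(1)}:=\ell-\frac{2(t_j(d,\ell)-v_j(\ell))}{d_j\gamma_j(d,\ell)^2}e_j$ and suppose $f(d,\ell^{(1)})>0$. Define $d^{(1)}:=d/f(d,\ell^{(1)})$, $\ell^{(2)}:=\ell^{(1)}+\frac{2(2v_j(\ell^{(1)})-\gamma_j(d^{(1)},\ell^{(1)}))}{(m-1)d^{(1)}_j\gamma_j(d^{(1)},\ell^{(1)})^2+2}e_j$, $d^{(2)}:=d^{(1)}+\frac{2}{m-1}\frac{1}{\gamma_j(d^{(1)},\ell^{(1)})^2}e_j$, and $d^{(3)}:=d^{(2)}/f(d^{(2)},\ell^{(2)})$. Then there is a scalar $\alpha(d,\ell)>\frac{m^2-1}{m^2}$ such that $$d^{(3)}=\alpha(d,\ell)\Big(d+\frac{2}{m-1}\frac{1}{\gamma_j(d,\ell)^2}e_j\Big).$$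
   Context: Standing assumption: $A=[a_1|\cdots|a_m]\in\mathbb{R}^{n\times m}$ has columns of unit Euclidean norm and $\{A\lambda:\lambda\ge0\}=\mathbb{R}^n$; $u\in\mathbb{R}^m$. $D=\mathrm{diag}(d)$; $r(\ell)=\tfrac12(u+\ell)$, $v(\ell)=\tfrac12(u-\ell)$, $B(d)=ADA^\top$, $y(d,\ell)=B(d)^{-1}ADr(\ell)$, $t(d,\ell)=A^\top y(d,\ell)-r(\ell)$, $f(d,\ell)=v(\ell)^\top Dv(\ell)-t(d,\ell)^\top Dt(d,\ell)$, $\gamma_i(d,\ell)=\sqrt{f(d,\ell)a_i^\top B(d)^{-1}a_i}$ when $f(d,\ell)>0$. $\ell$ is a certified lower bound with certificate matrix $\Lambda\in\mathbb{R}^{m\times m}$ if $A\Lambda=-A$, $\Lambda\ge0$, $-\Lambda^\top u\ge\ell$. *)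

theory Defs
  imports "HOL-Analysis.Analysis"
begin

definition diagm :: "real^'m \<Rightarrow> real^'m^'m" where
  "diagm d = (\<chi> i k. if i = k then d $ i else 0)"

definition rvec :: "real^'m \<Rightarrow> real^'m \<Rightarrow> real^'m" where
  "rvec u l = (1/2) *\<^sub>R (u + l)"

definition vvec :: "real^'m \<Rightarrow> real^'m \<Rightarrow> real^'m" where
  "vvec u l = (1/2) *\<^sub>R (u - l)"

definition Bmat :: "real^'m^'n \<Rightarrow> real^'m \<Rightarrow> real^'n^'n" where
  "Bmat A d = A ** diagm d ** transpose A"

definition yvec :: "real^'m^'n \<Rightarrow> real^'m \<Rightarrow> real^'m \<Rightarrow> real^'m \<Rightarrow> real^'n" where
  "yvec A u d l = matrix_inv (Bmat A d) *v (A *v (diagm d *v rvec u l))"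

definition tvec :: "real^'m^'n \<Rightarrow> real^'m \<Rightarrow> real^'m \<Rightarrow> real^'m \<Rightarrow> real^'m" where
  "tvec A u d l = transpose A *v yvec A u d l - rvec u l"

definition fval :: "real^'m^'n \<Rightarrow> real^'m \<Rightarrow> real^'m \<Rightarrow> real^'m \<Rightarrow> real" where
  "fval A u d l = vvec u l \<bullet> (diagm d *v vvec u l) - tvec A u d l \<bullet> (diagm d *v tvec A u d l)"

text \<open>gamma_i(d,l) = sqrt(f(d,l) a_i^T B(d)^{-1} a_i); only meaningful when f(d,l) > 0.\<close>
definition gam :: "real^'m^'n \<Rightarrow> real^'m \<Rightarrow> real^'m \<Rightarrow> real^'m \<Rightarrow> 'm \<Rightarrow> real" where
  "gam A u d l i = sqrt (fval A u d l * (column i A \<bullet> (matrix_inv (Bmat A d) *v column i A)))"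

definition certified_lb :: "real^'m^'n \<Rightarrow> real^'m \<Rightarrow> real^'m \<Rightarrow> real^'m^'m \<Rightarrow> bool" where
  "certified_lb A u l \<Lambda> \<longleftrightarrow> A ** \<Lambda> = - A \<and> (\<forall>i k. \<Lambda> $ i $ k \<ge> 0)
     \<and> (\<forall>i. (- (transpose \<Lambda> *v u)) $ i \<ge> l $ i)"

end

theory Submission
  imports Defs
begin

text \<open>Changing d and l only in coordinate j perturbs B(d) by a rank-one term h a_j a_j^T and
  ADr by a multiple of a_j, so by Sherman-Morrison y(d,l) moves along z = B(d)^-1 a_j and f changes
  by an explicit rational expression in g = a_j^T z, a_j^T y and the j-th coordinates.
  The first update keeps d and moves y onto the face a_j^T y = u_j, with
  f(d,l1) = 1 - s^2/g =: phi in (0,1), where s = a_j^T y - u_j; rescaling d by 1/phi leaves y and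
  gamma_j unchanged and restores f = 1. Starting on the face, the second update yields
  f(d2,l2) = m^2/(m^2-1) independently of the data, hence
  d3 = (m^2-1)/(m^2 phi) (d + 2/((m-1) gamma_j(d,l)^2) e_j), and phi < 1 gives the bound on alpha.
  Positive spanning makes every B(d) with d > 0 invertible and forces m >= 2.\<close>

lemma diagm_mult_vec: "diagm d *v x = (\<chi> i. d $ i * x $ i)"
  unfolding diagm_def matrix_vector_mult_def vec_eq_iff
  by (simp add: if_distrib[where f="\<lambda>t. t * _"] cong: if_cong)

lemma inner_diagm_commute: "(diagm d *v x) \<bullet> y = x \<bullet> (diagm d *v y)"
  by (simp add: diagm_mult_vec inner_vec_def mult_ac)

lemma inner_matrix_vector_mult:
  fixes A :: "real^'m^'n"
  shows "(A *v x) \<bullet> y = x \<bullet> (transpose A *v y)"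
  by (metis dot_lmul_matrix inner_commute transpose_matrix_vector)

lemma transpose_mult_vec_nth: "(transpose A *v y) $ i = column i A \<bullet> y"
  by (simp add: matrix_vector_mult_def transpose_def column_def inner_vec_def mult.commute)

lemma Bmat_mult_vec: "Bmat A d *v x = A *v (diagm d *v (transpose A *v x))"
  by (simp add: Bmat_def matrix_vector_mul_assoc matrix_mul_assoc del: transpose_matrix_vector)

lemma inner_Bmat_commute:
  fixes A :: "real^'m^'n"
  shows "(Bmat A d *v x) \<bullet> y = x \<bullet> (Bmat A d *v y)"
proof -
  have "transpose (diagm d) = diagm d"
    by (simp add: transpose_def diagm_def vec_eq_iff)
  then show ?thesis
    unfolding Bmat_mult_vec inner_matrix_vector_mult inner_diagm_commute
    by (simp add: inner_commute del: transpose_matrix_vector)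
qed

lemma diagm_scaleR: "diagm (c *\<^sub>R d) = c *\<^sub>R diagm d"
  by (simp add: diagm_def vec_eq_iff)

lemma Bmat_scaleR: "Bmat A (c *\<^sub>R d) = c *\<^sub>R Bmat A d"
  by (simp add: Bmat_def diagm_scaleR matrix_scalar_ac scalar_matrix_assoc)

lemma invertible_matrix_inv_mult_vec:
  assumes "invertible B"
  shows "B *v (matrix_inv B *v w) = w"
proof -
  have "B ** matrix_inv B = mat 1"
    using assms someI_ex[of "\<lambda>B'. B ** B' = mat 1 \<and> B' ** B = mat 1"]
    unfolding invertible_def matrix_inv_def by blast
  then show ?thesis
    by (simp add: matrix_vector_mul_assoc)
qed

lemma matrix_inv_mult_vec_eqI:
  fixes B :: "real^'n^'n"
  assumes "invertible B" and "B *v y = w"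
  shows "matrix_inv B *v w = y"
  using inj_matrix_vector_mult[OF assms(1)] invertible_matrix_inv_mult_vec[OF assms(1)] assms(2)
  by (metis injD)

lemma invertible_Bmat:
  fixes A :: "real^'m^'n"
  assumes surj: "surj ((*v) A)" and dpos: "\<forall>i. d $ i > 0"
  shows "invertible (Bmat A d)"
  unfolding invertible_left_inverse matrix_left_invertible_ker
proof (intro allI impI)
  fix x assume "Bmat A d *v x = 0"
  define q where "q = transpose A *v x"
  have "(\<Sum>i\<in>UNIV. d $ i * (q $ i)\<^sup>2) = (diagm d *v q) \<bullet> q"
    by (simp add: diagm_mult_vec inner_vec_def power2_eq_square mult_ac)
  also have "\<dots> = (A *v (diagm d *v q)) \<bullet> x"
    unfolding q_def by (rule inner_matrix_vector_mult[symmetric])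
  also have "\<dots> = 0"
    using \<open>Bmat A d *v x = 0\<close> by (simp add: Bmat_mult_vec q_def del: transpose_matrix_vector)
  finally have "\<forall>i. d $ i * (q $ i)\<^sup>2 = 0"
    using dpos by (subst (asm) sum_nonneg_eq_0_iff) (simp_all add: less_imp_le)
  then have "q = 0"
    using dpos by (simp add: vec_eq_iff) (metis less_irrefl)
  obtain lam where "x = A *v lam"
    using surj by (metis surjD)
  then have "x \<bullet> x = lam \<bullet> q"
    by (simp add: q_def inner_matrix_vector_mult)
  then show "x = 0"
    using \<open>q = 0\<close> by simp
qed

lemma two_le_card_if_positive_spanning:
  fixes A :: "real^'m^'n"
  assumes pos_span: "{A *v lam | lam. \<forall>i. lam $ i \<ge> 0} = UNIV"
  shows "CARD('m) \<ge> 2"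
proof (rule ccontr)
  assume "\<not> CARD('m) \<ge> 2"
  moreover have "CARD('m) > 0"
    by simp
  ultimately have "CARD('m) = 1"
    by linarith
  then obtain j :: 'm where j: "UNIV = {j}"
    using card_1_singletonE by blast
  have cone: "A *v lam = lam $ j *\<^sub>R column j A" for lam
    unfolding matrix_vector_mult_def column_def vec_eq_iff j by (simp add: mult.commute)
  define x :: "real^'n" where "x = 1"
  have "x \<in> {A *v lam | lam. \<forall>i. lam $ i \<ge> 0}" and "- x \<in> {A *v lam | lam. \<forall>i. lam $ i \<ge> 0}"
    unfolding pos_span by simp_all
  then obtain lam mu where lam: "x = A *v lam" "\<forall>i. lam $ i \<ge> 0" and mu: "- x = A *v mu" "\<forall>i. mu $ i \<ge> 0"
    by blast
  have "mu $ j *\<^sub>R x = (mu $ j * lam $ j) *\<^sub>R column j A"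
    using lam(1) cone by simp
  also have "\<dots> = - (lam $ j *\<^sub>R x)"
    using mu(1) cone by (metis mult.commute scaleR_minus_right scaleR_scaleR)
  finally have "(lam $ j + mu $ j) *\<^sub>R x = 0"
    by (simp add: scaleR_add_left)
  moreover have "x \<noteq> 0"
    by (simp add: x_def)
  ultimately have "lam $ j = 0"
    using lam(2) mu(2) by (metis add_nonneg_eq_0_iff scaleR_eq_0_iff)
  then show False
    using lam(1) cone \<open>x \<noteq> 0\<close> by simp
qed

lemma tvec_nth_minus_vvec_nth:
  "tvec A u d l $ j - vvec u l $ j = column j A \<bullet> yvec A u d l - u $ j"
  by (simp add: tvec_def rvec_def vvec_def transpose_mult_vec_nth algebra_simps
      del: transpose_matrix_vector)

text \<open>The normal equations B(d) y = ADr make the quadratic terms of f cancel.\<close>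
lemma fval_eq_cross_term:
  fixes A :: "real^'m^'n"
  assumes "invertible (Bmat A d)"
  shows "fval A u d l = (A *v (diagm d *v rvec u l)) \<bullet> yvec A u d l - u \<bullet> (diagm d *v l)"
proof -
  define y r q where "y = yvec A u d l" and "r = rvec u l" and "q = transpose A *v y"
  have Dq: "q \<bullet> (diagm d *v q) = r \<bullet> (diagm d *v q)"
  proof -
    have "Bmat A d *v y = A *v (diagm d *v r)"
      using invertible_matrix_inv_mult_vec[OF assms] by (simp add: y_def r_def yvec_def)
    then have "A *v (diagm d *v q) = A *v (diagm d *v r)"
      by (simp add: Bmat_mult_vec q_def del: transpose_matrix_vector)
    then show ?thesis
      by (metis inner_commute inner_diagm_commute inner_matrix_vector_mult q_def)
  qed
  have "vvec u l \<bullet> (diagm d *v vvec u l) - r \<bullet> (diagm d *v r) = - (u \<bullet> (diagm d *v l))"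
    by (simp add: vvec_def r_def rvec_def diagm_mult_vec inner_vec_def
        sum_subtractf[symmetric] sum_negf[symmetric] algebra_simps)
  moreover have "tvec A u d l \<bullet> (diagm d *v tvec A u d l) = r \<bullet> (diagm d *v r) - q \<bullet> (diagm d *v r)"
    using Dq
    by (simp add: tvec_def y_def[symmetric] r_def[symmetric] q_def[symmetric] del: transpose_matrix_vector)
      (simp add: matrix_vector_mult_diff_distrib inner_diff_left inner_diff_right inner_diagm_commute inner_commute)
  moreover have "q \<bullet> (diagm d *v r) = (A *v (diagm d *v r)) \<bullet> y"
    by (metis inner_commute inner_matrix_vector_mult q_def)
  ultimately show ?thesis
    by (simp add: fval_def y_def r_def)
qed

lemma matrix_inv_scaleR_mult_vec:
  fixes B :: "real^'n^'n"
  assumes "invertible B" and "c \<noteq> 0"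
  shows "matrix_inv (c *\<^sub>R B) *v w = (1 / c) *\<^sub>R (matrix_inv B *v w)"
  using assms
  by (intro matrix_inv_mult_vec_eqI scalar_invertible)
    (simp_all add: invertible_matrix_inv_mult_vec matrix_vector_mult_scaleR scaleR_matrix_vector_assoc[symmetric])

lemma yvec_scaleR:
  fixes A :: "real^'m^'n"
  assumes "invertible (Bmat A d)" and "c \<noteq> 0"
  shows "yvec A u (c *\<^sub>R d) l = yvec A u d l"
  using matrix_inv_scaleR_mult_vec[OF assms]
  by (simp add: yvec_def Bmat_scaleR diagm_scaleR matrix_vector_mult_scaleR scaleR_matrix_vector_assoc[symmetric]
      assms(2))

lemma fval_scaleR:
  fixes A :: "real^'m^'n"
  assumes "invertible (Bmat A d)" and "c \<noteq> 0"
  shows "fval A u (c *\<^sub>R d) l = c * fval A u d l"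
  by (simp add: fval_def tvec_def yvec_scaleR[OF assms] diagm_scaleR scaleR_matrix_vector_assoc[symmetric]
      right_diff_distrib)

lemma gam_scaleR:
  fixes A :: "real^'m^'n"
  assumes "invertible (Bmat A d)" and "c > 0"
  shows "gam A u (c *\<^sub>R d) l i = gam A u d l i"
  using assms
  by (simp add: gam_def fval_scaleR Bmat_scaleR matrix_inv_scaleR_mult_vec)

lemma diagm_axis_update_mult_vec:
  "diagm (d + h *\<^sub>R axis j 1) *v x = diagm d *v x + (h * x $ j) *\<^sub>R axis j 1"
  by (simp add: diagm_mult_vec vec_eq_iff axis_def algebra_simps)

lemma Bmat_axis_update_mult_vec:
  fixes A :: "real^'m^'n"
  shows "Bmat A (d + h *\<^sub>R axis j 1) *v x = Bmat A d *v x + (h * (column j A \<bullet> x)) *\<^sub>R column j A"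
  unfolding Bmat_mult_vec diagm_axis_update_mult_vec
  by (simp add: matrix_vector_right_distrib matrix_vector_mult_scaleR matrix_vector_mult_basis
      transpose_mult_vec_nth del: transpose_matrix_vector)

lemma ADr_axis_update:
  fixes A :: "real^'m^'n"
  shows "A *v (diagm (d + h *\<^sub>R axis j 1) *v rvec u (l + e *\<^sub>R axis j 1))
    = A *v (diagm d *v rvec u l) + (h * rvec u l $ j + (d $ j + h) * e / 2) *\<^sub>R column j A"
proof -
  have "diagm (d + h *\<^sub>R axis j 1) *v rvec u (l + e *\<^sub>R axis j 1)
      = diagm d *v rvec u l + (h * rvec u l $ j + (d $ j + h) * e / 2) *\<^sub>R axis j 1"
    by (simp add: diagm_mult_vec rvec_def vec_eq_iff axis_def algebra_simps)
  then show ?thesis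
    by (simp add: matrix_vector_right_distrib matrix_vector_mult_scaleR matrix_vector_mult_basis)
qed

lemma inner_diagm_axis_update:
  "u \<bullet> (diagm (d + h *\<^sub>R axis j 1) *v (l + e *\<^sub>R axis j 1))
    = u \<bullet> (diagm d *v l) + u $ j * (h * l $ j + (d $ j + h) * e)"
proof -
  have "diagm (d + h *\<^sub>R axis j 1) *v (l + e *\<^sub>R axis j 1)
      = diagm d *v l + (h * l $ j + (d $ j + h) * e) *\<^sub>R axis j 1"
    by (simp add: diagm_mult_vec vec_eq_iff axis_def algebra_simps)
  then show ?thesis
    by (simp add: inner_add_right inner_axis)
qed

lemma yvec_fval_axis_update:
  fixes A :: "real^'m^'n" and u d l :: "real^'m" and h e :: real
  assumes B: "invertible (Bmat A d)" and B': "invertible (Bmat A (d + h *\<^sub>R axis j 1))"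
  defines "z \<equiv> matrix_inv (Bmat A d) *v column j A"
  defines "g \<equiv> column j A \<bullet> z" and "p \<equiv> column j A \<bullet> yvec A u d l"
    and "c \<equiv> h * rvec u l $ j + (d $ j + h) * e / 2"
  defines "\<beta> \<equiv> (c - h * p) / (1 + h * g)"
  assumes Q: "1 + h * g \<noteq> 0"
  shows "yvec A u (d + h *\<^sub>R axis j 1) (l + e *\<^sub>R axis j 1) = yvec A u d l + \<beta> *\<^sub>R z"
    and "fval A u (d + h *\<^sub>R axis j 1) (l + e *\<^sub>R axis j 1)
           = fval A u d l + (\<beta> + c) * p + c * \<beta> * g - u $ j * (h * l $ j + (d $ j + h) * e)"
proof -
  let ?a = "column j A" and ?d = "d + h *\<^sub>R axis j 1" and ?l = "l + e *\<^sub>R axis j 1"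
  define y where "y = yvec A u d l"
  define w where "w = A *v (diagm d *v rvec u l)"
  have By: "Bmat A d *v y = w"
    using invertible_matrix_inv_mult_vec[OF B] by (simp add: y_def w_def yvec_def)
  have Bz: "Bmat A d *v z = ?a"
    using invertible_matrix_inv_mult_vec[OF B] by (simp add: z_def)
  have ay: "?a \<bullet> y = p"
    by (simp add: y_def p_def)
  have w': "A *v (diagm ?d *v rvec u ?l) = w + c *\<^sub>R ?a"
    unfolding w_def c_def by (rule ADr_axis_update)
  have "Bmat A ?d *v (y + \<beta> *\<^sub>R z) = w + (\<beta> + h * (p + \<beta> * g)) *\<^sub>R ?a"
    by (simp add: Bmat_axis_update_mult_vec By Bz ay g_def algebra_simps)
  also have "\<beta> + h * (p + \<beta> * g) = \<beta> * (1 + h * g) + h * p"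
    by (simp add: algebra_simps)
  also have "\<dots> = c"
    using Q by (simp add: \<beta>_def)
  finally have y': "yvec A u ?d ?l = y + \<beta> *\<^sub>R z"
    unfolding yvec_def w' by (rule matrix_inv_mult_vec_eqI[OF B'])
  then show "yvec A u ?d ?l = yvec A u d l + \<beta> *\<^sub>R z"
    by (simp add: y_def)
  have wz: "w \<bullet> z = p"
    using inner_Bmat_commute[of A d y z] By Bz by (simp add: p_def y_def inner_commute)
  have "fval A u ?d ?l = (w + c *\<^sub>R ?a) \<bullet> (y + \<beta> *\<^sub>R z) - u \<bullet> (diagm ?d *v ?l)"
    using fval_eq_cross_term[OF B', of u ?l] w' y' by simp
  also have "\<dots> = (w \<bullet> y - u \<bullet> (diagm d *v l)) + \<beta> * (w \<bullet> z) + c * (?a \<bullet> y) + c * \<beta> * g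
      - u $ j * (h * l $ j + (d $ j + h) * e)"
    unfolding inner_diagm_axis_update by (simp add: g_def algebra_simps)
  also have "\<dots> = fval A u d l + (\<beta> + c) * p + c * \<beta> * g - u $ j * (h * l $ j + (d $ j + h) * e)"
    unfolding wz ay fval_eq_cross_term[OF B, of u l, folded w_def y_def] by (simp add: algebra_simps)
  finally show "fval A u ?d ?l
      = fval A u d l + (\<beta> + c) * p + c * \<beta> * g - u $ j * (h * l $ j + (d $ j + h) * e)" .
qed

text \<open>The choice of e makes c - h U = -1/(kG), after which the value no longer depends on U, L, D.\<close>
lemma rank_one_step_value:
  fixes U L R D G k h e :: real
  assumes D: "D > 0" and G: "G > 0" and k: "k > 0"
    and h: "h = 2 / k * (1 / G\<^sup>2)"
    and e: "e = 2 * ((U - L) - G) / (k * D * G\<^sup>2 + 2)"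
    and R: "R = (U + L) / 2"
  defines "c \<equiv> h * R + (D + h) * e / 2"
  defines "\<beta> \<equiv> (c - h * U) / (1 + h * G\<^sup>2)"
  shows "1 + (\<beta> + c) * U + c * \<beta> * G\<^sup>2 - U * (h * L + (D + h) * e) = (k + 1)\<^sup>2 / ((k + 1)\<^sup>2 - 1)"
proof -
  have hG: "h * G\<^sup>2 = 2 / k"
    using G by (simp add: h)
  have Q: "1 + h * G\<^sup>2 > 0"
    using k unfolding hG by (simp add: add_pos_pos)
  have q: "c - h * U = - 1 / (k * G)"
  proof -
    have pos: "k * D * G\<^sup>2 + 2 > 0"
      using D G k by (simp add: add_pos_pos)
    have "D + h = (k * D * G\<^sup>2 + 2) / (k * G\<^sup>2)"
      using G k by (simp add: h field_simps)
    then have De: "(D + h) * e / 2 = (U - L - G) / (k * G\<^sup>2)"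
      using pos G k by (simp add: e) (simp add: field_simps)
    have "c - h * U = (L - U) / (k * G\<^sup>2) + (D + h) * e / 2"
      using G k by (simp add: c_def R h field_simps)
    also have "\<dots> = - 1 / (k * G)"
      unfolding De using G k by (simp add: field_simps power2_eq_square)
    finally show ?thesis .
  qed
  have "1 + (\<beta> + c) * U + c * \<beta> * G\<^sup>2 - U * (h * L + (D + h) * e)
      = 1 + (c - h * U)\<^sup>2 * G\<^sup>2 / (1 + h * G\<^sup>2)"
  proof -
    have X: "h * L + (D + h) * e = 2 * c - h * U"
      by (simp add: c_def R field_simps)
    have "1 + (\<beta> + c) * U + c * \<beta> * G\<^sup>2 - U * (h * L + (D + h) * e)
        = 1 + \<beta> * ((c - h * U) * G\<^sup>2) + (\<beta> * (1 + h * G\<^sup>2) - (c - h * U)) * U"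
      unfolding X by (simp add: algebra_simps)
    moreover have "\<beta> * (1 + h * G\<^sup>2) = c - h * U"
      using Q by (simp add: \<beta>_def)
    ultimately show ?thesis
      by (simp add: \<beta>_def power2_eq_square)
  qed
  also have "\<dots> = (k + 1)\<^sup>2 / ((k + 1)\<^sup>2 - 1)"
  proof -
    have "k * k + k * 2 > 0"
      using k by (simp add: add_pos_pos)
    then show ?thesis
      using G k unfolding q hG by (simp add: field_simps power2_eq_square)
  qed
  finally show ?thesis .
qed

lemma coordinate_cut:
  fixes A :: "real^'m^'n" and u d l :: "real^'m" and j :: 'm
  assumes B: "invertible (Bmat A d)"
  defines "g \<equiv> column j A \<bullet> (matrix_inv (Bmat A d) *v column j A)"
    and "s \<equiv> column j A \<bullet> yvec A u d l - u $ j"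
  defines "l' \<equiv> l - (2 * s / (d $ j * g)) *\<^sub>R axis j 1"
  assumes g: "g \<noteq> 0" and dj: "d $ j \<noteq> 0"
  shows "column j A \<bullet> yvec A u d l' = u $ j" and "fval A u d l' = fval A u d l - s\<^sup>2 / g"
proof -
  define e where "e = - (2 * s / (d $ j * g))"
  have l': "l' = l + e *\<^sub>R axis j 1"
    by (simp add: l'_def e_def)
  have de: "e * d $ j = - 2 * s / g"
    using dj by (simp add: e_def)
  note update = yvec_fval_axis_update[of A d 0 j u l e, simplified, OF B, folded l' g_def]
  have "column j A \<bullet> yvec A u d l' = column j A \<bullet> yvec A u d l + (e * d $ j) * g / 2"
    unfolding update(1) by (simp add: g_def algebra_simps)
  also have "\<dots> = u $ j"
    unfolding de using g by (simp add: s_def field_simps)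
  finally show "column j A \<bullet> yvec A u d l' = u $ j" .
  have "fval A u d l' = fval A u d l + (e * d $ j) * s + (e * d $ j)\<^sup>2 * g / 4"
    using update(2) by (simp add: s_def algebra_simps power2_eq_square)
  also have "\<dots> = fval A u d l - s\<^sup>2 / g"
    unfolding de using g by (simp add: field_simps power2_eq_square)
  finally show "fval A u d l' = fval A u d l - s\<^sup>2 / g" .
qed

lemma coordinate_rank_one_step:
  fixes A :: "real^'m^'n" and u d l :: "real^'m" and j :: 'm and k :: real
  assumes surj: "surj ((*v) A)" and dpos: "\<forall>i. d $ i > 0" and k: "k > 0"
    and f1: "fval A u d l = 1" and face: "column j A \<bullet> yvec A u d l = u $ j"
    and G: "gam A u d l j > 0"
  shows "fval A u (d + (2 / k * (1 / (gam A u d l j)\<^sup>2)) *\<^sub>R axis j 1)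
           (l + (2 * (2 * vvec u l $ j - gam A u d l j) / (k * d $ j * (gam A u d l j)\<^sup>2 + 2)) *\<^sub>R axis j 1)
         = (k + 1)\<^sup>2 / ((k + 1)\<^sup>2 - 1)"
proof -
  define G where "G = gam A u d l j"
  define h where "h = 2 / k * (1 / G\<^sup>2)"
  define e where "e = 2 * (2 * vvec u l $ j - G) / (k * d $ j * G\<^sup>2 + 2)"
  have B: "invertible (Bmat A d)"
    using invertible_Bmat[OF surj dpos] .
  have "\<forall>i. (d + h *\<^sub>R axis j 1) $ i > 0"
    using dpos k G by (simp add: h_def G_def axis_def add_pos_nonneg)
  then have B': "invertible (Bmat A (d + h *\<^sub>R axis j 1))"
    using invertible_Bmat[OF surj] by blast
  have g: "column j A \<bullet> (matrix_inv (Bmat A d) *v column j A) = G\<^sup>2"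
    using G by (simp add: G_def gam_def f1)
  have "h * G\<^sup>2 = 2 / k"
    using G by (simp add: h_def G_def)
  then have Q: "1 + h * G\<^sup>2 > 0"
    using k by (simp add: add_pos_pos)
  have e': "e = 2 * ((u $ j - l $ j) - G) / (k * d $ j * G\<^sup>2 + 2)"
    by (simp add: e_def vvec_def)
  have R: "rvec u l $ j = (u $ j + l $ j) / 2"
    by (simp add: rvec_def)
  have "d $ j > 0" and "G > 0"
    using dpos G by (simp_all add: G_def)
  from rank_one_step_value[OF this k h_def e' R]
  have "fval A u (d + h *\<^sub>R axis j 1) (l + e *\<^sub>R axis j 1) = (k + 1)\<^sup>2 / ((k + 1)\<^sup>2 - 1)"
    using yvec_fval_axis_update(2)[OF B B', of u l e, unfolded g face f1] Q by simp
  then show ?thesis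
    by (simp add: G_def h_def e_def)
qed

lemma cut_and_rescale:
  fixes A :: "real^'m^'n" and u d l :: "real^'m" and j :: 'm
  assumes surj: "surj ((*v) A)" and dpos: "\<forall>i. d $ i > 0" and f1: "fval A u d l = 1"
    and hj: "0 < column j A \<bullet> yvec A u d l - u $ j"
            "column j A \<bullet> yvec A u d l - u $ j \<le> gam A u d l j"
  defines "l' \<equiv> l - (2 * (tvec A u d l $ j - vvec u l $ j) / (d $ j * (gam A u d l j)\<^sup>2)) *\<^sub>R axis j 1"
  assumes pos: "fval A u d l' > 0"
  defines "d' \<equiv> (1 / fval A u d l') *\<^sub>R d"
  shows "fval A u d l' < 1" and "fval A u d' l' = 1" and "column j A \<bullet> yvec A u d' l' = u $ j"
    and "(gam A u d' l' j)\<^sup>2 = fval A u d l' * (gam A u d l j)\<^sup>2" and "gam A u d' l' j > 0"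
proof -
  let ?a = "column j A"
  have B: "invertible (Bmat A d)"
    using invertible_Bmat[OF surj dpos] .
  define g where "g = ?a \<bullet> (matrix_inv (Bmat A d) *v ?a)"
  define s where "s = ?a \<bullet> yvec A u d l - u $ j"
  have gam: "gam A u d l j = sqrt g"
    by (simp add: gam_def f1 g_def)
  have s: "0 < s" "s \<le> sqrt g"
    using hj by (simp_all add: s_def gam)
  then have g: "g > 0"
    by (metis less_le_trans real_sqrt_gt_0_iff)
  have gam_sq: "(gam A u d l j)\<^sup>2 = g"
    using g by (simp add: gam)
  have l': "l' = l - (2 * s / (d $ j * g)) *\<^sub>R axis j 1"
    by (simp add: l'_def tvec_nth_minus_vvec_nth s_def gam_sq)
  have "g \<noteq> 0" and "d $ j \<noteq> 0"
    using g dpos by (metis less_irrefl)+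
  note cut = coordinate_cut[OF B, of j u l, folded g_def s_def, OF this, folded l']
  define \<phi> where "\<phi> = fval A u d l'"
  have \<phi>: "0 < \<phi>" "\<phi> < 1"
    using pos cut(2) s g by (simp_all add: \<phi>_def f1)
  then show "fval A u d l' < 1"
    by (simp add: \<phi>_def)
  have d': "d' = (1 / \<phi>) *\<^sub>R d"
    by (simp add: d'_def \<phi>_def)
  show "fval A u d' l' = 1"
    using fval_scaleR[OF B, of "1 / \<phi>"] \<phi> by (simp add: d' \<phi>_def)
  show "?a \<bullet> yvec A u d' l' = u $ j"
    using yvec_scaleR[OF B, of "1 / \<phi>"] cut(1) \<phi> by (simp add: d')
  have "gam A u d' l' j = sqrt (\<phi> * g)"
    using gam_scaleR[OF B, of "1 / \<phi>"] \<phi> by (simp add: d' gam_def \<phi>_def g_def)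
  then show "(gam A u d' l' j)\<^sup>2 = fval A u d l' * (gam A u d l j)\<^sup>2" and "gam A u d' l' j > 0"
    using \<phi> g by (simp_all add: \<phi>_def gam_sq)
qed

lemma rescaled_axis_update_eq:
  fixes x y :: "'a::real_vector" and \<phi> k c :: real
  assumes \<phi>: "0 < \<phi>" "\<phi> < 1" and k: "k > 0"
  shows "\<exists>\<alpha>. \<alpha> > ((k + 1)\<^sup>2 - 1) / (k + 1)\<^sup>2 \<and>
    (1 / ((k + 1)\<^sup>2 / ((k + 1)\<^sup>2 - 1))) *\<^sub>R ((1 / \<phi>) *\<^sub>R x + (2 / k * (1 / (\<phi> * c))) *\<^sub>R y)
      = \<alpha> *\<^sub>R (x + (2 / k * (1 / c)) *\<^sub>R y)"
proof (intro exI conjI)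
  define \<alpha> where "\<alpha> = ((k + 1)\<^sup>2 - 1) / ((k + 1)\<^sup>2 * \<phi>)"
  have M: "(k + 1)\<^sup>2 - 1 > 0"
    using k by (simp add: power2_eq_square algebra_simps add_pos_pos)
  show "((k + 1)\<^sup>2 - 1) / (k + 1)\<^sup>2 < \<alpha>"
    unfolding \<alpha>_def using M k \<phi> by (intro divide_strict_left_mono) simp_all
  have "1 / ((k + 1)\<^sup>2 / ((k + 1)\<^sup>2 - 1)) * (1 / \<phi>) = \<alpha>"
    and "1 / ((k + 1)\<^sup>2 / ((k + 1)\<^sup>2 - 1)) * (2 / k * (1 / (\<phi> * c))) = \<alpha> * (2 / k * (1 / c))"
    using M \<phi> by (simp_all add: \<alpha>_def field_simps)
  then show "(1 / ((k + 1)\<^sup>2 / ((k + 1)\<^sup>2 - 1))) *\<^sub>R ((1 / \<phi>) *\<^sub>R x + (2 / k * (1 / (\<phi> * c))) *\<^sub>R y)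
      = \<alpha> *\<^sub>R (x + (2 / k * (1 / c)) *\<^sub>R y)"
    by (simp only: scaleR_add_right scaleR_scaleR)
qed

theorem theorem7:
  fixes A :: "real^'m^'n" and u d l :: "real^'m" and \<Lambda> :: "real^'m^'m" and j :: 'm
  assumes unit_cols: "\<forall>i. norm (column i A) = 1"
    and pos_span: "{A *v lam | lam. \<forall>i. lam $ i \<ge> 0} = UNIV"
    and dpos: "\<forall>i. d $ i > 0"
    and cert: "certified_lb A u l \<Lambda>"
    and f1: "fval A u d l = 1"
    and hj: "0 < column j A \<bullet> yvec A u d l - u $ j"
            "column j A \<bullet> yvec A u d l - u $ j \<le> gam A u d l j"
  defines "l1 \<equiv> l - (2 * (tvec A u d l $ j - vvec u l $ j) / (d $ j * (gam A u d l j)\<^sup>2)) *\<^sub>R axis j 1"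
  assumes f_l1: "fval A u d l1 > 0"
  defines "d1 \<equiv> (1 / fval A u d l1) *\<^sub>R d"
  defines "l2 \<equiv> l1 + (2 * (2 * vvec u l1 $ j - gam A u d1 l1 j)
                   / ((real CARD('m) - 1) * d1 $ j * (gam A u d1 l1 j)\<^sup>2 + 2)) *\<^sub>R axis j 1"
    and "d2 \<equiv> d1 + (2 / (real CARD('m) - 1) * (1 / (gam A u d1 l1 j)\<^sup>2)) *\<^sub>R axis j 1"
  defines "d3 \<equiv> (1 / fval A u d2 l2) *\<^sub>R d2"
  shows "\<exists>\<alpha>::real. \<alpha> > ((real CARD('m))\<^sup>2 - 1) / (real CARD('m))\<^sup>2 \<and>
           d3 = \<alpha> *\<^sub>R (d + (2 / (real CARD('m) - 1) * (1 / (gam A u d l j)\<^sup>2)) *\<^sub>R axis j 1)"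
proof -
  define k where "k = real CARD('m) - 1"
  have k: "k > 0"
    using two_le_card_if_positive_spanning[OF pos_span] by (simp add: k_def)
  have surj: "surj ((*v) A)"
    unfolding surj_def using pos_span by blast
  note cut = cut_and_rescale[OF surj dpos f1 hj, folded l1_def, OF f_l1, folded d1_def]
  have "\<forall>i. d1 $ i > 0"
    using dpos f_l1 by (simp add: d1_def)
  from coordinate_rank_one_step[OF surj this k cut(2,3,5)]
  have F: "fval A u d2 l2 = (k + 1)\<^sup>2 / ((k + 1)\<^sup>2 - 1)"
    by (simp add: d2_def l2_def k_def)
  have "d3 = (1 / ((k + 1)\<^sup>2 / ((k + 1)\<^sup>2 - 1))) *\<^sub>R ((1 / fval A u d l1) *\<^sub>R d
      + (2 / k * (1 / (fval A u d l1 * (gam A u d l j)\<^sup>2))) *\<^sub>R axis j 1)"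
    unfolding d3_def F unfolding d2_def cut(4) unfolding d1_def by (simp add: k_def)
  with rescaled_axis_update_eq[OF f_l1 cut(1) k] show ?thesis
    by (simp add: k_def)
qed

end
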